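(* Let $p\in P$ and consider $F_p$ extended to the one-point compactification $S^3=\mathbb{R}^3\cup\{\infty\}$ by declaring $\infty$ a fixed point. Then $F_p$ is not $C^1$ at $\infty$.
   Context: For $p=(a,b,c)\in\mathbb{R}^3$, $F_p$ is the Rössler vector field $\dot x=-y-z,\ \dot y=x+ay,\ \dot z=bx+z(x-c)$ on $\mathbb{R}^3$. $P\subseteq\mathbb{R}^3$ is an open set of parameters such that for every $p=(a,b,c)\in P$: $a,b\in(0,1)$, $c>1$; $F_p$ has exactly two fixed points $P_{In}=(0,0,0)$ and $P_{Out}=(c-ab,b-\frac{c}{a},\frac{c}{a}-b)$, both saddle-foci, $P_{In}$ with one-dimensional stable manifold and $P_{Out}$ with one-dimensional unstable manifold; and at least one of the saddle indices at $P_{In},P_{Out}$ is $<1$. *)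

theory Defs
  imports "HOL-Analysis.Analysis"
begin

text \<open>Parameters p = (a,b,c) are points of real^3 with a = p$1, b = p$2, c = p$3.\<close>

definition rossler :: "real^3 \<Rightarrow> real^3 \<Rightarrow> real^3" where
  "rossler p v = vector [ - (v$2) - v$3,
                          v$1 + (p$1) * v$2,
                          (p$2) * v$1 + v$3 * (v$1 - p$3) ]"

definition rossler_jac :: "real^3 \<Rightarrow> real^3 \<Rightarrow> real^3^3" where
  "rossler_jac p v = vector [ vector [0, -1, -1],
                              vector [1, p$1, 0],
                              vector [p$2 + v$3, 0, v$1 - p$3] ]"

definition P_In :: "real^3 \<Rightarrow> real^3" where
  "P_In p = vector [0, 0, 0]"

definition P_Out :: "real^3 \<Rightarrow> real^3" where
  "P_Out p = vector [p$3 - p$1 * p$2, p$2 - p$3 / p$1, p$3 / p$1 - p$2]"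

definition cplx_eigenvalues :: "real^3^3 \<Rightarrow> complex set" where
  "cplx_eigenvalues J = {\<mu>. det (mat \<mu> - (\<chi> i j. complex_of_real (J$i$j))) = 0}"

definition saddle_focus_stable1 :: "real^3^3 \<Rightarrow> real \<Rightarrow> bool" where
  "saddle_focus_stable1 J nu \<longleftrightarrow> (\<exists>lam rho omega. lam < 0 \<and> rho > 0 \<and> omega \<noteq> 0 \<and>
      cplx_eigenvalues J = {complex_of_real lam, Complex rho omega, Complex rho (- omega)} \<and>
      nu = rho / (- lam))"

definition saddle_focus_unstable1 :: "real^3^3 \<Rightarrow> real \<Rightarrow> bool" where
  "saddle_focus_unstable1 J nu \<longleftrightarrow> (\<exists>lam rho omega. lam > 0 \<and> rho < 0 \<and> omega \<noteq> 0 \<and>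
      cplx_eigenvalues J = {complex_of_real lam, Complex rho omega, Complex rho (- omega)} \<and>
      nu = (- rho) / lam)"

definition good_param :: "real^3 \<Rightarrow> bool" where
  "good_param p \<longleftrightarrow> 0 < p$1 \<and> p$1 < 1 \<and> 0 < p$2 \<and> p$2 < 1 \<and> p$3 > 1 \<and>
     {v. rossler p v = 0} = {P_In p, P_Out p} \<and> P_In p \<noteq> P_Out p \<and>
     (\<exists>nu1 nu2. saddle_focus_stable1 (rossler_jac p (P_In p)) nu1 \<and>
                saddle_focus_unstable1 (rossler_jac p (P_Out p)) nu2 \<and>
                (nu1 < 1 \<or> nu2 < 1))"

text \<open>Chart of S^3 = R^3 \<union> {\<infinity>} at \<infinity>: the inversion y \<mapsto> y / |y|^2 (an involution of R^3 - {0}),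
  sending \<infinity> to 0. The push-forward of a vector field F on R^3 to this chart is
  G(y) = D(inv)(inv y) (F (inv y)) = |y|^2 F(inv y) - 2 (y . F(inv y)) y for y \<noteq> 0,
  and G(0) = 0 since \<infinity> is declared a fixed point.\<close>
definition inversion :: "real^3 \<Rightarrow> real^3" where
  "inversion y = inverse ((norm y)\<^sup>2) *\<^sub>R y"

definition field_at_infinity :: "(real^3 \<Rightarrow> real^3) \<Rightarrow> real^3 \<Rightarrow> real^3" where
  "field_at_infinity F y =
     (if y = 0 then 0
      else (norm y)\<^sup>2 *\<^sub>R F (inversion y) - (2 * (y \<bullet> F (inversion y))) *\<^sub>R y)"

definition C1_at :: "('a::real_normed_vector \<Rightarrow> 'b::real_normed_vector) \<Rightarrow> 'a \<Rightarrow> bool" where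
  "C1_at f x \<longleftrightarrow> (\<exists>U f'. open U \<and> x \<in> U \<and>
      (\<forall>y\<in>U. (f has_derivative blinfun_apply (f' y)) (at y)) \<and> continuous_on U f')"

end

theory Submission
  imports Defs
begin

text \<open>The nonlinearity \<open>z x\<close> of the Rossler field is quadratic, while the inversion chart
  only damps a field by the factor \<open>|y|\<^sup>2\<close>. Hence the push-forward does not vanish at
  \<open>\<infinity>\<close>: along the diagonal \<open>y = (t, 0, t)\<close> its first component equals \<open>(c - b) t - 1/2\<close>,
  which tends to \<open>-1/2\<close>. So the extended field is not even continuous at \<open>\<infinity>\<close>, for every
  parameter.\<close>

lemma C1_at_imp_isCont:
  assumes "C1_at f x"
  shows "isCont f x"
proof -
  from assms obtain f' where "(f has_derivative f') (at x)"
    unfolding C1_at_def by blast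
  then show ?thesis
    by (rule has_derivative_continuous)
qed

lemma tendsto_diagonal: "((\<lambda>t. vector [t, 0, t] :: real^3) \<longlongrightarrow> 0) (at 0)"
proof -
  have "(\<lambda>t. vector [t, 0, t] :: real^3) = (\<lambda>t. t *\<^sub>R vector [1, 0, 1])"
    by (simp add: fun_eq_iff vec_eq_iff forall_3)
  moreover have "((\<lambda>t. t *\<^sub>R (vector [1, 0, 1] :: real^3)) \<longlongrightarrow> 0 *\<^sub>R vector [1, 0, 1]) (at 0)"
    by (intro tendsto_intros)
  ultimately show ?thesis
    by simp
qed

lemma norm_diagonal_squared: "(norm (vector [t, 0, t] :: real^3))\<^sup>2 = 2 * t\<^sup>2"
  unfolding power2_norm_eq_inner by (simp add: inner_vec_def sum_3 power2_eq_square)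

lemma inversion_diagonal:
  assumes "t \<noteq> 0"
  shows "inversion (vector [t, 0, t]) = vector [1 / (2 * t), 0, 1 / (2 * t)]"
  using assms unfolding inversion_def norm_diagonal_squared
  by (simp add: vec_eq_iff forall_3 power2_eq_square field_simps)

lemma field_at_infinity_rossler_diagonal_1:
  fixes p :: "real^3"
  assumes "t \<noteq> 0"
  shows "field_at_infinity (rossler p) (vector [t, 0, t]) $ 1 = (p$3 - p$2) * t - 1/2"
proof -
  define s where "s = 1 / (2 * t)"
  let ?y = "vector [t, 0, t] :: real^3"
  have "?y \<noteq> 0"
    using assms by (metis vector_3(1) zero_index)
  have F: "rossler p (inversion ?y) = vector [- s, s, p$2 * s + s * (s - p$3)]"
    using assms by (simp add: s_def inversion_diagonal rossler_def)
  have "field_at_infinity (rossler p) ?y $ 1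
      = 2 * t\<^sup>2 * (- s) - 2 * (t * (- s) + t * (p$2 * s + s * (s - p$3))) * t"
    using \<open>?y \<noteq> 0\<close>
    by (simp add: field_at_infinity_def norm_diagonal_squared F inner_vec_def sum_3)
  also have "\<dots> = (p$3 - p$2) * t - 1/2"
    using assms by (simp add: s_def field_simps power2_eq_square)
  finally show ?thesis .
qed

lemma field_at_infinity_rossler_not_isCont:
  fixes p :: "real^3"
  shows "\<not> isCont (field_at_infinity (rossler p)) 0"
proof
  let ?G = "field_at_infinity (rossler p)"
  assume "isCont ?G 0"
  then have "((\<lambda>t. ?G (vector [t, 0, t]) $ 1) \<longlongrightarrow> ?G 0 $ 1) (at 0)"
    by (intro tendsto_vec_nth isCont_tendsto_compose[OF _ tendsto_diagonal])
  then have to_zero: "((\<lambda>t. ?G (vector [t, 0, t]) $ 1) \<longlongrightarrow> 0) (at (0::real))"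
    by (simp add: field_at_infinity_def)
  have "((\<lambda>t. (p$3 - p$2) * t - 1/2) \<longlongrightarrow> (p$3 - p$2) * 0 - 1/2) (at (0::real))"
    by (intro tendsto_intros)
  moreover have "\<forall>\<^sub>F t in at 0. (p$3 - p$2) * t - 1/2 = ?G (vector [t, 0, t]) $ 1"
    by (auto simp: eventually_at_filter field_at_infinity_rossler_diagonal_1)
  ultimately have "((\<lambda>t. ?G (vector [t, 0, t]) $ 1) \<longlongrightarrow> - 1/2) (at (0::real))"
    by (simp add: Lim_transform_eventually)
  with to_zero show False
    using tendsto_unique[OF at_neq_bot] by fastforce
qed

theorem lemma2p2:
  fixes P :: "(real^3) set" and p :: "real^3"
  assumes "open P"
    and "\<forall>q\<in>P. good_param q"
    and "p \<in> P"
  shows "\<not> C1_at (field_at_infinity (rossler p)) 0"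
  using C1_at_imp_isCont field_at_infinity_rossler_not_isCont by blast

end
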